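(* Let $B$ be a space and let $f:E\to X$ be a fibrewise map over $B$ between fibrant spaces over $B$. Then $\mathrm{secat}_B(f)=\mathrm{secat}(f)$.
   Context: A fibrewise space over $B$ is a space $X$ with a map $p_X:X\to B$; a fibrewise map $f:X\to Y$ satisfies $p_Yf=p_X$. A fibrant space over $B$ is a fibrewise space whose projection $p_X$ is a Hurewicz fibration. A fibrewise homotopy is a homotopy $H:X\times[0,1]\to Y$ with $p_Y(H(x,t))=p_X(x)$ for all $t$; write $\simeq_B$. $\mathrm{secat}_B(f)$: least $n$ such that $X$ is covered by $n+1$ open sets $U$ each admitting a fibrewise map $s:U\to E$ with $f\circ s\simeq_B$ the inclusion $U\hookrightarrow X$ ($\infty$ if none). $\mathrm{secat}(f)$ (ordinary sectional category of an arbitrary map): least $n$ such that $X$ is covered by $n+1$ open sets $U$ each admitting a map $s:U\to E$ with $f\circ s$ homotopic to the inclusion $U\hookrightarrow X$ ($\infty$ if none). *)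

theory Defs
  imports "HOL-Analysis.Analysis"
begin

text \<open>Homotopy lifting property of p : Y \<rightarrow> B with respect to all test spaces whose
  carrier lives in the type 'z.\<close>
definition hlp_wrt :: "'z itself \<Rightarrow> ('y \<Rightarrow> 'b) \<Rightarrow> 'y topology \<Rightarrow> 'b topology \<Rightarrow> bool" where
  "hlp_wrt _ p Y B \<longleftrightarrow>
     (\<forall>(Z::'z topology) g h.
        continuous_map Z Y g \<and>
        continuous_map (prod_topology Z (top_of_set {0..1::real})) B h \<and>
        (\<forall>z\<in>topspace Z. h (z, 0) = p (g z))
        \<longrightarrow> (\<exists>H. continuous_map (prod_topology Z (top_of_set {0..1::real})) Y H \<and>
                 (\<forall>z\<in>topspace Z. H (z, 0) = g z) \<and>
                 (\<forall>w\<in>topspace (prod_topology Z (top_of_set {0..1::real})). p (H w) = h w)))"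

definition fibrant_wrt :: "'z itself \<Rightarrow> ('y \<Rightarrow> 'b) \<Rightarrow> 'y topology \<Rightarrow> 'b topology \<Rightarrow> bool" where
  "fibrant_wrt T p Y B \<longleftrightarrow> continuous_map Y B p \<and> hlp_wrt T p Y B"

definition fibrewise_map :: "('e \<Rightarrow> 'b) \<Rightarrow> 'e topology \<Rightarrow> ('x \<Rightarrow> 'b) \<Rightarrow> 'x topology \<Rightarrow> ('e \<Rightarrow> 'x) \<Rightarrow> bool" where
  "fibrewise_map pE E pX X f \<longleftrightarrow> continuous_map E X f \<and> (\<forall>e\<in>topspace E. pX (f e) = pE e)"

text \<open>Ordinary sectional category of an arbitrary map f : E \<rightarrow> X (\<infinity> if no finite cover).\<close>
definition secat :: "'e topology \<Rightarrow> 'x topology \<Rightarrow> ('e \<Rightarrow> 'x) \<Rightarrow> enat" where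
  "secat E X f = (INF n \<in> {n::nat. \<exists>U :: nat \<Rightarrow> 'x set.
       (\<forall>i\<le>n. openin X (U i)) \<and> topspace X \<subseteq> (\<Union>i\<le>n. U i) \<and>
       (\<forall>i\<le>n. \<exists>s. continuous_map (subtopology X (U i)) E s \<and>
                  homotopic_with (\<lambda>_. True) (subtopology X (U i)) X (f \<circ> s) id)}. enat n)"

definition secat_B :: "('e \<Rightarrow> 'b) \<Rightarrow> 'e topology \<Rightarrow> ('x \<Rightarrow> 'b) \<Rightarrow> 'x topology \<Rightarrow> ('e \<Rightarrow> 'x) \<Rightarrow> enat" where
  "secat_B pE E pX X f = (INF n \<in> {n::nat. \<exists>U :: nat \<Rightarrow> 'x set.
       (\<forall>i\<le>n. openin X (U i)) \<and> topspace X \<subseteq> (\<Union>i\<le>n. U i) \<and>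
       (\<forall>i\<le>n. \<exists>s. continuous_map (subtopology X (U i)) E s \<and>
                  (\<forall>x\<in>U i \<inter> topspace X. pE (s x) = pX x) \<and>
                  homotopic_with (\<lambda>h. \<forall>x\<in>U i \<inter> topspace X. pX (h x) = pX x)
                     (subtopology X (U i)) X (f \<circ> s) id)}. enat n)"

end

theory Submission
  imports Defs
begin

text \<open>Only \<open>secat_B pE E pX X f \<le> secat E X f\<close> needs work: a homotopy section \<open>s\<close> over an open
  set \<open>U\<close> must be turned into a fibrewise one. Let \<open>H\<close> be a homotopy from \<open>f \<circ> s\<close> to the
  inclusion. Lifting \<open>pX \<circ> H\<close> through \<open>pE\<close> from \<open>s\<close> gives \<open>K\<close>, and \<open>s' = K(-, 1)\<close> is a strict
  section over \<open>B\<close>. The homotopies \<open>f \<circ> K\<close> and \<open>H\<close> start together and have the same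
  projection, so running \<open>f \<circ> K\<close> backwards and then \<open>H\<close> gives a homotopy from \<open>f \<circ> s'\<close> to the
  inclusion whose projection is a path followed by its reverse. That projection contracts, with
  ends fixed, to the constant one; lifting the contraction through \<open>pX\<close> and reading the lift
  along three sides of the square yields a fibrewise homotopy.\<close>

lemma hlp_wrt_liftE:
  fixes Z :: "'z topology"
  assumes "hlp_wrt TYPE('z) p Y B" and "continuous_map Z Y g"
    and "continuous_map (prod_topology Z (top_of_set {0..1::real})) B h"
    and "\<And>z. z \<in> topspace Z \<Longrightarrow> h (z, 0) = p (g z)"
  obtains H where "continuous_map (prod_topology Z (top_of_set {0..1})) Y H"
    and "\<And>z. z \<in> topspace Z \<Longrightarrow> H (z, 0) = g z"
    and "\<And>w. w \<in> topspace (prod_topology Z (top_of_set {0..1})) \<Longrightarrow> p (H w) = h w"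
  using assms unfolding hlp_wrt_def by blast

text \<open>The fibrancy hypotheses only provide lifts for test spaces of type \<open>'x \<times> real\<close>; a test
  space \<open>Z\<close> is handled through the copy \<open>Z \<times> {0}\<close>.\<close>

lemma hlp_wrt_from_prod_real:
  fixes p :: "'y \<Rightarrow> 'b"
  assumes hlp: "hlp_wrt TYPE('z \<times> real) p Y B"
  shows "hlp_wrt TYPE('z) p Y B"
  unfolding hlp_wrt_def
proof (intro allI impI, elim conjE)
  fix Z :: "'z topology" and g :: "'z \<Rightarrow> 'y" and h :: "'z \<times> real \<Rightarrow> 'b"
  assume g: "continuous_map Z Y g"
    and h: "continuous_map (prod_topology Z (top_of_set {0..1})) B h"
    and h0: "\<forall>z\<in>topspace Z. h (z, 0) = p (g z)"
  define Z' where "Z' = prod_topology Z (top_of_set {0::real})"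
  have fst_fst: "continuous_map (prod_topology Z' (top_of_set {0..1})) Z (\<lambda>w. fst (fst w))"
    unfolding Z'_def using continuous_map_compose[OF continuous_map_fst continuous_map_fst]
    by (simp add: o_def)
  have g': "continuous_map Z' Y (\<lambda>z. g (fst z))"
    unfolding Z'_def using continuous_map_compose[OF continuous_map_fst g] by (simp add: o_def)
  have h': "continuous_map (prod_topology Z' (top_of_set {0..1})) B (\<lambda>w. h (fst (fst w), snd w))"
    using continuous_map_compose[OF continuous_map_pairedI[OF fst_fst continuous_map_snd] h]
    by (simp add: o_def)
  have h'0: "h (fst z, 0) = p (g (fst z))" if "z \<in> topspace Z'" for z
    using h0 that by (auto simp: Z'_def)
  obtain H' where H': "continuous_map (prod_topology Z' (top_of_set {0..1})) Y H'"
    and H'0: "\<And>z. z \<in> topspace Z' \<Longrightarrow> H' (z, 0) = g (fst z)"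
    and H'p: "\<And>w. w \<in> topspace (prod_topology Z' (top_of_set {0..1})) \<Longrightarrow> p (H' w) = h (fst (fst w), snd w)"
    by (rule hlp_wrt_liftE[OF hlp g' h']) (use h'0 in simp_all)
  have embed: "continuous_map (prod_topology Z (top_of_set {0..1})) (prod_topology Z' (top_of_set {0..1}))
          (\<lambda>w. ((fst w, 0), snd w))"
    unfolding Z'_def by (intro continuous_map_pairedI continuous_map_fst continuous_map_snd) auto
  show "\<exists>H. continuous_map (prod_topology Z (top_of_set {0..1})) Y H \<and>
              (\<forall>z\<in>topspace Z. H (z, 0) = g z) \<and>
              (\<forall>w\<in>topspace (prod_topology Z (top_of_set {0..1})). p (H w) = h w)"
  proof (intro exI conjI ballI)
    show "continuous_map (prod_topology Z (top_of_set {0..1})) Y (\<lambda>w. H' ((fst w, 0), snd w))"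
      using continuous_map_compose[OF embed H'] by (simp add: o_def)
    show "H' ((fst (z, 0), 0), snd (z, 0::real)) = g z" if "z \<in> topspace Z" for z
      using H'0[of "(z, 0)"] that by (simp add: Z'_def)
    show "p (H' ((fst w, 0), snd w)) = h w" if "w \<in> topspace (prod_topology Z (top_of_set {0..1}))" for w
      using H'p[of "((fst w, 0), snd w)"] that by (auto simp: Z'_def)
  qed
qed

lemma continuous_map_snd_real: "continuous_map (prod_topology A (top_of_set S)) euclideanreal snd"
  using continuous_map_snd[of A "top_of_set S"] continuous_map_in_subtopology by blast

lemma continuous_map_homotopy_compose:
  assumes F: "continuous_map (prod_topology A (top_of_set {0..1::real})) Y F"
    and \<alpha>: "continuous_map X A \<alpha>" and \<tau>: "continuous_map X euclideanreal \<tau>"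
    and \<tau>01: "\<And>x. x \<in> topspace X \<Longrightarrow> \<tau> x \<in> {0..1}"
  shows "continuous_map X Y (\<lambda>x. F (\<alpha> x, \<tau> x))"
proof -
  have "continuous_map X (prod_topology A (top_of_set {0..1})) (\<lambda>x. (\<alpha> x, \<tau> x))"
    using \<tau>01 by (intro continuous_map_pairedI \<alpha>) (auto simp: continuous_map_in_subtopology \<tau>)
  then show ?thesis
    using continuous_map_compose[OF _ F] by (simp add: o_def)
qed

lemma continuous_map_homotopy_join:
  assumes F: "continuous_map (prod_topology A (top_of_set {0..1::real})) Y F"
    and G: "continuous_map (prod_topology A (top_of_set {0..1::real})) Y G"
    and FG: "\<And>a. a \<in> topspace A \<Longrightarrow> F (a, 1) = G (a, 0)"
  shows "continuous_map (prod_topology A (top_of_set {0..1})) Y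
           (\<lambda>z. if snd z \<le> 1/2 then F (fst z, 2 * snd z) else G (fst z, 2 * snd z - 1))"
proof (rule continuous_map_cases_le[OF continuous_map_snd_real continuous_map_canonical_const])
  let ?T = "prod_topology A (top_of_set {0..1::real})"
  have fst: "continuous_map (subtopology ?T S) A fst" for S
    by (rule continuous_map_from_subtopology[OF continuous_map_fst])
  have snd: "continuous_map (subtopology ?T S) euclideanreal snd" for S
    by (rule continuous_map_from_subtopology[OF continuous_map_snd_real])
  show "continuous_map (subtopology ?T {z \<in> topspace ?T. snd z \<le> 1/2}) Y (\<lambda>z. F (fst z, 2 * snd z))"
    by (rule continuous_map_homotopy_compose[OF F fst]) (auto intro: continuous_map_real_mult_left snd)
  show "continuous_map (subtopology ?T {z \<in> topspace ?T. 1/2 \<le> snd z}) Y (\<lambda>z. G (fst z, 2 * snd z - 1))"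
    by (rule continuous_map_homotopy_compose[OF G fst])
      (auto intro!: continuous_map_diff continuous_map_real_mult_left snd)
  show "F (fst z, 2 * snd z) = G (fst z, 2 * snd z - 1)" if "z \<in> topspace ?T" "snd z = 1/2" for z
  proof -
    have "2 * snd z = 1" using that(2) by simp
    then show ?thesis using that(1) FG[of "fst z"] by (simp add: mem_Times_iff)
  qed
qed

lemma homotopic_with_along_square_sides:
  fixes K :: "('a \<times> real) \<times> real \<Rightarrow> 'y"
  assumes K: "continuous_map (prod_topology (prod_topology A (top_of_set {0..1})) (top_of_set {0..1})) Y K"
    and left: "\<And>u. u \<in> {0..1} \<Longrightarrow> P (\<lambda>a. K ((a, 0), u))"
    and top: "\<And>t. t \<in> {0..1} \<Longrightarrow> P (\<lambda>a. K ((a, t), 1))"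
    and right: "\<And>u. u \<in> {0..1} \<Longrightarrow> P (\<lambda>a. K ((a, 1), u))"
  shows "homotopic_with P A Y (\<lambda>a. K ((a, 0), 0)) (\<lambda>a. K ((a, 1), 0))"
proof -
  let ?I = "top_of_set {0..1::real}"
  have side: "homotopic_with P A Y (\<lambda>a. K (\<gamma> a 0)) (\<lambda>a. K (\<gamma> a 1))"
    if \<gamma>: "continuous_map (prod_topology ?I A) (prod_topology (prod_topology A ?I) ?I) (\<lambda>w. \<gamma> (snd w) (fst w))"
      and P: "\<And>u. u \<in> {0..1} \<Longrightarrow> P (\<lambda>a. K (\<gamma> a u))" for \<gamma>
    unfolding homotopic_with_def
    using continuous_map_compose[OF \<gamma> K] P by (intro exI[of _ "\<lambda>w. K (\<gamma> (snd w) (fst w))"]) (simp add: o_def)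
  have up: "homotopic_with P A Y (\<lambda>a. K ((a, 0), 0)) (\<lambda>a. K ((a, 0), 1))"
    by (rule side[where \<gamma> = "\<lambda>a u. ((a, 0), u)", OF _ left])
      (intro continuous_map_pairedI continuous_map_fst continuous_map_snd continuous_map_const[THEN iffD2]; simp)
  have across: "homotopic_with P A Y (\<lambda>a. K ((a, 0), 1)) (\<lambda>a. K ((a, 1), 1))"
    by (rule side[where \<gamma> = "\<lambda>a t. ((a, t), 1)", OF _ top])
      (intro continuous_map_pairedI continuous_map_fst continuous_map_snd continuous_map_const[THEN iffD2]; simp)
  have down: "homotopic_with P A Y (\<lambda>a. K ((a, 1), 1)) (\<lambda>a. K ((a, 1), 0))"
    by (rule homotopic_with_symD, rule side[where \<gamma> = "\<lambda>a u. ((a, 1), u)", OF _ right])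
      (intro continuous_map_pairedI continuous_map_fst continuous_map_snd continuous_map_const[THEN iffD2]; simp)
  show ?thesis
    using homotopic_with_trans[OF homotopic_with_trans[OF up across] down] .
qed

lemma fibrewise_homotopic_of_projection_deformation:
  fixes p :: "'x \<Rightarrow> 'b" and L :: "'a \<times> real \<Rightarrow> 'x"
  assumes hlp: "hlp_wrt TYPE('a \<times> real) p X B"
    and L: "continuous_map (prod_topology A (top_of_set {0..1::real})) X L"
    and \<Phi>: "continuous_map
                (prod_topology (prod_topology A (top_of_set {0..1::real})) (top_of_set {0..1::real})) B \<Phi>"
    and \<Phi>_start: "\<And>z. z \<in> topspace (prod_topology A (top_of_set {0..1::real})) \<Longrightarrow> \<Phi> (z, 0) = p (L z)"
    and \<Phi>_sides: "\<And>a t u. \<lbrakk>a \<in> topspace A; t \<in> {0..1}; u \<in> {0..1}; t = 0 \<or> t = 1 \<or> u = 1\<rbrakk>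
                   \<Longrightarrow> \<Phi> ((a, t), u) = q a"
  shows "homotopic_with (\<lambda>h. \<forall>a\<in>topspace A. p (h a) = q a) A X (\<lambda>a. L (a, 0)) (\<lambda>a. L (a, 1))"
proof -
  let ?T = "prod_topology A (top_of_set {0..1::real})"
  obtain L' where L': "continuous_map (prod_topology ?T (top_of_set {0..1})) X L'"
    and L'_start: "\<And>z. z \<in> topspace ?T \<Longrightarrow> L' (z, 0) = L z"
    and L'_over: "\<And>w. w \<in> topspace (prod_topology ?T (top_of_set {0..1})) \<Longrightarrow> p (L' w) = \<Phi> w"
    using hlp_wrt_liftE[OF hlp L \<Phi> \<Phi>_start] by blast
  have "homotopic_with (\<lambda>h. \<forall>a\<in>topspace A. p (h a) = q a) A X (\<lambda>a. L' ((a, 0), 0)) (\<lambda>a. L' ((a, 1), 0))"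
    by (rule homotopic_with_along_square_sides[OF L']) (simp_all add: L'_over \<Phi>_sides)
  then show ?thesis
    by (rule homotopic_with_eq) (auto simp: L'_start)
qed

lemma fibrewise_homotopic_ends_of_homotopies_with_common_projection:
  fixes p :: "'x \<Rightarrow> 'b" and F G :: "'a \<times> real \<Rightarrow> 'x"
  assumes hlp: "hlp_wrt TYPE('a \<times> real) p X B" and p: "continuous_map X B p"
    and F: "continuous_map (prod_topology A (top_of_set {0..1::real})) X F"
    and G: "continuous_map (prod_topology A (top_of_set {0..1::real})) X G"
    and start: "\<And>a. a \<in> topspace A \<Longrightarrow> F (a, 0) = G (a, 0)"
    and over: "\<And>z. z \<in> topspace (prod_topology A (top_of_set {0..1::real})) \<Longrightarrow> p (F z) = p (G z)"
  shows "homotopic_with (\<lambda>h. \<forall>a\<in>topspace A. p (h a) = p (F (a, 1))) A X (\<lambda>a. F (a, 1)) (\<lambda>a. G (a, 1))"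
proof -
  let ?T = "prod_topology A (top_of_set {0..1::real})"
  have snd: "continuous_map ?T euclideanreal snd"
    by (rule continuous_map_snd_real)
  have F_rev: "continuous_map ?T X (\<lambda>z. F (fst z, 1 - snd z))"
    by (rule continuous_map_homotopy_compose[OF F continuous_map_fst]) (auto intro!: continuous_map_diff snd)
  define L where "L z = (if snd z \<le> 1/2 then F (fst z, 1 - 2 * snd z) else G (fst z, 2 * snd z - 1))" for z
  have L: "continuous_map ?T X L"
    by (rule continuous_map_eq[OF continuous_map_homotopy_join[OF F_rev G]]) (simp_all add: L_def start)
  \<comment> \<open>\<open>p (L (a, t)) = p (F (a, \<bar>2t - 1\<bar>))\<close>; raising the parameter to \<open>max \<bar>2t - 1\<bar> u\<close> contracts it.\<close>
  define \<Phi> where "\<Phi> w = p (F (fst (fst w), max \<bar>2 * snd (fst w) - 1\<bar> (snd w)))" for w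
  have \<Phi>: "continuous_map (prod_topology ?T (top_of_set {0..1::real})) B \<Phi>"
  proof (unfold \<Phi>_def, rule continuous_map_homotopy_compose[OF continuous_map_compose[OF F p], unfolded o_def])
    show "continuous_map (prod_topology ?T (top_of_set {0..1})) A (\<lambda>w. fst (fst w))"
      using continuous_map_compose[OF continuous_map_fst continuous_map_fst] by (simp add: o_def)
    have "continuous_map (prod_topology ?T (top_of_set {0..1})) euclideanreal (\<lambda>w. snd (fst w))"
      using continuous_map_compose[OF continuous_map_fst snd] by (simp add: o_def)
    then show "continuous_map (prod_topology ?T (top_of_set {0..1})) euclideanreal
                 (\<lambda>w. max \<bar>2 * snd (fst w) - 1\<bar> (snd w))"
      by (intro continuous_map_real_max continuous_map_real_abs continuous_map_diff
          continuous_map_real_mult_left continuous_map_snd_real continuous_map_canonical_const)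
  qed (auto simp: mem_Times_iff)
  have "homotopic_with (\<lambda>h. \<forall>a\<in>topspace A. p (h a) = p (F (a, 1))) A X (\<lambda>a. L (a, 0)) (\<lambda>a. L (a, 1))"
  proof (rule fibrewise_homotopic_of_projection_deformation[OF hlp L \<Phi>])
    show "\<Phi> (z, 0) = p (L z)" if "z \<in> topspace ?T" for z
    proof (cases "snd z \<le> 1/2")
      case True
      then have "\<bar>2 * snd z - 1\<bar> = 1 - 2 * snd z" by simp
      with True show ?thesis by (simp add: \<Phi>_def L_def)
    next
      case False
      with that over[of "(fst z, 2 * snd z - 1)"] show ?thesis
        by (auto simp: \<Phi>_def L_def abs_if mem_Times_iff)
    qed
    show "\<Phi> ((a, t), u) = p (F (a, 1))" if "t \<in> {0..1}" "u \<in> {0..1}" "t = 0 \<or> t = 1 \<or> u = 1" for a t u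
      using that by (auto simp: \<Phi>_def)
  qed
  then show ?thesis
    by (simp add: L_def)
qed

lemma fibrewise_section_of_homotopy_section:
  fixes A :: "'a topology" and pE :: "'e \<Rightarrow> 'b" and pX :: "'x \<Rightarrow> 'b"
  assumes hE: "hlp_wrt TYPE('a \<times> real) pE E B" and hX: "hlp_wrt TYPE('a \<times> real) pX X B"
    and pX: "continuous_map X B pX" and f: "fibrewise_map pE E pX X f"
    and s: "continuous_map A E s" and hom: "homotopic_with (\<lambda>_. True) A X (f \<circ> s) j"
  obtains s' where "continuous_map A E s'" and "\<And>a. a \<in> topspace A \<Longrightarrow> pE (s' a) = pX (j a)"
    and "homotopic_with (\<lambda>h. \<forall>a\<in>topspace A. pX (h a) = pX (j a)) A X (f \<circ> s') j"
proof -
  let ?T = "prod_topology A (top_of_set {0..1::real})"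
  have cf: "continuous_map E X f" and pf: "\<And>e. e \<in> topspace E \<Longrightarrow> pX (f e) = pE e"
    using f unfolding fibrewise_map_def by auto
  obtain H0 where H0: "continuous_map (prod_topology (top_of_set {0..1::real}) A) X H0"
    and H0_0: "\<And>a. H0 (0, a) = f (s a)" and H0_1: "\<And>a. H0 (1, a) = j a"
    using hom unfolding homotopic_with_def by auto
  define H where "H = (\<lambda>z. H0 (snd z, fst z))"
  have H: "continuous_map ?T X H"
    using continuous_map_compose[OF continuous_map_pairedI[OF continuous_map_snd continuous_map_fst] H0]
    by (simp add: H_def o_def)
  have H_start: "pX (H (a, 0)) = pE (s a)" if "a \<in> topspace A" for a
    using pf continuous_map_image_subset_topspace[OF s] that by (auto simp: H_def H0_0)
  obtain K where K: "continuous_map ?T E K" and K_0: "\<And>a. a \<in> topspace A \<Longrightarrow> K (a, 0) = s a"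
    and K_over: "\<And>z. z \<in> topspace ?T \<Longrightarrow> pE (K z) = pX (H z)"
    using hlp_wrt_liftE[OF hlp_wrt_from_prod_real[OF hE] s continuous_map_compose[OF H pX, unfolded o_def] H_start]
    by blast
  define s' where "s' a = K (a, 1)" for a
  have s': "continuous_map A E s'"
    unfolding s'_def
    by (rule continuous_map_homotopy_compose[OF K continuous_map_id, unfolded id_def]) auto
  have s'_over: "pE (s' a) = pX (j a)" if "a \<in> topspace A" for a
    using K_over[of "(a, 1)"] that by (simp add: s'_def H_def H0_1)
  have "homotopic_with (\<lambda>h. \<forall>a\<in>topspace A. pX (h a) = pX (f (K (a, 1)))) A X
          (\<lambda>a. f (K (a, 1))) (\<lambda>a. H (a, 1))"
  proof (rule fibrewise_homotopic_ends_of_homotopies_with_common_projection[OF hX pX _ H])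
    show "continuous_map ?T X (\<lambda>z. f (K z))"
      using continuous_map_compose[OF K cf] by (simp add: o_def)
    show "f (K (a, 0)) = H (a, 0)" if "a \<in> topspace A" for a
      using that by (simp add: K_0 H_def H0_0)
    show "pX (f (K z)) = pX (H z)" if "z \<in> topspace ?T" for z
    proof -
      have "K z \<in> topspace E"
        using continuous_map_image_subset_topspace[OF K] that by blast
      then show ?thesis using pf K_over[OF that] by simp
    qed
  qed
  moreover have "(\<lambda>a. f (K (a, 1))) = f \<circ> s'" and "(\<lambda>a. H (a, 1)) = j"
    by (simp_all add: s'_def H_def H0_1 fun_eq_iff)
  moreover have "pX (f (K (a, 1))) = pX (j a)" if "a \<in> topspace A" for a
    using s'_over[OF that] pf continuous_map_image_subset_topspace[OF s'] that by (auto simp: s'_def)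
  ultimately have "homotopic_with (\<lambda>h. \<forall>a\<in>topspace A. pX (h a) = pX (j a)) A X (f \<circ> s') j"
    by (auto elim!: homotopic_with_mono)
  with s' s'_over that show ?thesis by blast
qed

lemma fibrewise_section_iff_homotopy_section:
  fixes pE :: "'e \<Rightarrow> 'b" and pX :: "'x \<Rightarrow> 'b"
  assumes "fibrant_wrt TYPE('x \<times> real) pE E B" and "fibrant_wrt TYPE('x \<times> real) pX X B"
    and f: "fibrewise_map pE E pX X f"
  shows "(\<exists>s. continuous_map (subtopology X U) E s \<and> (\<forall>x\<in>U \<inter> topspace X. pE (s x) = pX x) \<and>
              homotopic_with (\<lambda>h. \<forall>x\<in>U \<inter> topspace X. pX (h x) = pX x) (subtopology X U) X (f \<circ> s) id)
     \<longleftrightarrow> (\<exists>s. continuous_map (subtopology X U) E s \<and>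
              homotopic_with (\<lambda>_. True) (subtopology X U) X (f \<circ> s) id)"
proof
  assume "\<exists>s. continuous_map (subtopology X U) E s \<and> homotopic_with (\<lambda>_. True) (subtopology X U) X (f \<circ> s) id"
  then obtain s where s: "continuous_map (subtopology X U) E s"
    and hom: "homotopic_with (\<lambda>_. True) (subtopology X U) X (f \<circ> s) id" by blast
  have hlp: "hlp_wrt TYPE('x \<times> real) pE E B" "hlp_wrt TYPE('x \<times> real) pX X B"
    and pX: "continuous_map X B pX"
    using assms(1,2) unfolding fibrant_wrt_def by auto
  obtain s' where "continuous_map (subtopology X U) E s'"
    and "\<And>x. x \<in> topspace (subtopology X U) \<Longrightarrow> pE (s' x) = pX (id x)"
    and "homotopic_with (\<lambda>h. \<forall>x\<in>topspace (subtopology X U). pX (h x) = pX (id x)) (subtopology X U) X (f \<circ> s') id"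
    using fibrewise_section_of_homotopy_section[OF hlp pX f s hom] by blast
  then show "\<exists>s. continuous_map (subtopology X U) E s \<and> (\<forall>x\<in>U \<inter> topspace X. pE (s x) = pX x) \<and>
              homotopic_with (\<lambda>h. \<forall>x\<in>U \<inter> topspace X. pX (h x) = pX x) (subtopology X U) X (f \<circ> s) id"
    by (auto simp: Int_commute)
qed (auto intro: homotopic_with_mono)

theorem theorem2p9:
  fixes B :: "'b topology" and E :: "'e topology" and X :: "'x topology"
    and pE :: "'e \<Rightarrow> 'b" and pX :: "'x \<Rightarrow> 'b" and f :: "'e \<Rightarrow> 'x"
  assumes "fibrant_wrt TYPE('x \<times> real) pE E B"
    and "fibrant_wrt TYPE('x \<times> real) pX X B"
    and "fibrewise_map pE E pX X f"
  shows "secat_B pE E pX X f = secat E X f"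
  unfolding secat_B_def secat_def fibrewise_section_iff_homotopy_section[OF assms] ..

end
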